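(* For every instance of the box problem with an exogenous ordering, there is a $\kappa$-thresholding policy whose expected net value is at least half of the supremum of the expected net values of all sequential search procedures for the same boxes that may open boxes in any adaptively chosen order and claim the prize from any opened box (i.e. at least half the expected net value of Weitzman's optimal search procedure).
   Context: Box problem: there are boxes $1,\ldots,m$. Box $i$ contains an independent non-negative random prize $v_i$ and has opening cost $c_i\ge 0$. A sequential search procedure opens boxes one at a time (adaptively), paying $c_i$ to open box $i$ and observing $v_i$. It may stop at any time and claim the prize of at most one opened box. Its net value is the claimed prize (or $0$) minus the total cost of opened boxes. The priority $z_i$ of box $i$ is defined by $\mathbb{E}[(v_i-z_i)^+]=c_i$ (assumed well-defined). The covered call value is $\kappa_i=\min\{v_i,z_i\}$. In the box problem with an exogenous ordering, the searcher must consider the boxes one by one in the given order $1,\ldots,m$. For each box she decides whether to open it, and if she opens it, whether to claim its prize (and stop). Once a box is skipped or its prize is left unclaimed, she cannot return to it. A $\kappa$-thresholding policy with target interval $X=(\theta,\infty)$ or $X=[\theta,\infty)$ is the exogenous-order policy that declines to open every box $i$ with $z_i\notin X$. For a box with $z_i\in X$, it opens the box and claims the prize if and only if $v_i\in X$. *)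

theory Defs
  imports "HOL-Probability.Probability"
begin

text \<open>Boxes are indexed by natural numbers i < m (box i here is box i+1 of the paper).
  An outcome is a vector of prizes  w :: nat => real  (w i = prize of box i).\<close>

text \<open>Actions of a general (adaptive, free-order) sequential search procedure:
  open box i, or stop and claim the prize of box j (Some j) or nothing (None).\<close>
datatype action = Open nat | Stop "nat option"

text \<open>A deterministic adaptive search procedure: chooses the next action from the
  history (list of opened boxes together with the observed prizes).\<close>
type_synonym search_policy = "(nat \<times> real) list \<Rightarrow> action"

definition claim_value :: "(nat \<times> real) list \<Rightarrow> (nat \<Rightarrow> real) \<Rightarrow> nat option \<Rightarrow> real" where
  "claim_value h w a = (case a of None \<Rightarrow> 0
      | Some j \<Rightarrow> (if j \<in> fst ` set h then w j else 0))"

text \<open>Invalid actions (re-opening or opening a non-existing box)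
  are treated as stopping without claiming anything.\<close>
fun search_run :: "nat \<Rightarrow> (nat \<Rightarrow> real) \<Rightarrow> search_policy \<Rightarrow> (nat \<Rightarrow> real) \<Rightarrow> nat
      \<Rightarrow> (nat \<times> real) list \<Rightarrow> real" where
  "search_run m c s w 0 h = (case s h of Stop a \<Rightarrow> claim_value h w a | Open i \<Rightarrow> 0)"
| "search_run m c s w (Suc k) h = (case s h of
       Stop a \<Rightarrow> claim_value h w a
     | Open i \<Rightarrow> (if i < m \<and> i \<notin> fst ` set h
                  then - c i + search_run m c s w k (h @ [(i, w i)]) else 0))"

definition search_value :: "nat \<Rightarrow> (nat \<Rightarrow> real) \<Rightarrow> search_policy \<Rightarrow> (nat \<Rightarrow> real) \<Rightarrow> real" where
  "search_value m c s w = search_run m c s w m []"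

definition opt_search_value :: "nat \<Rightarrow> (nat \<Rightarrow> real measure) \<Rightarrow> (nat \<Rightarrow> real) \<Rightarrow> real" where
  "opt_search_value m M c =
     (SUP s \<in> {s. integrable (PiM {..<m} M) (search_value m c s)}.
        \<integral>w. search_value m c s w \<partial>PiM {..<m} M)"

definition target_interval :: "real set \<Rightarrow> bool" where
  "target_interval X \<longleftrightarrow> (\<exists>\<theta>. X = {\<theta><..} \<or> X = {\<theta>..})"

text \<open>Net value of the kappa-thresholding policy with target X, considering the boxes
  in the exogenous order given by the list (here [0..<m]).\<close>
fun threshold_run :: "(nat \<Rightarrow> real) \<Rightarrow> (nat \<Rightarrow> real) \<Rightarrow> real set \<Rightarrow> nat list
      \<Rightarrow> (nat \<Rightarrow> real) \<Rightarrow> real" where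
  "threshold_run c z X [] w = 0"
| "threshold_run c z X (i # is) w =
     (if z i \<in> X then - c i + (if w i \<in> X then w i else threshold_run c z X is w)
      else threshold_run c z X is w)"

definition threshold_value :: "nat \<Rightarrow> (nat \<Rightarrow> real measure) \<Rightarrow> (nat \<Rightarrow> real) \<Rightarrow> (nat \<Rightarrow> real)
      \<Rightarrow> real set \<Rightarrow> real" where
  "threshold_value m M c z X = (\<integral>w. threshold_run c z X [0..<m] w \<partial>PiM {..<m} M)"

end

theory Submission
  imports Defs
begin

text \<open>Both sides are compared with \<open>K = E[max (0, max\<^sub>i \<kappa>\<^sub>i)]\<close>.
  Upper bound: when a search procedure opens box \<open>i\<close> and sees \<open>v\<^sub>i\<close>, replacing \<open>v\<^sub>i\<close> by
  \<open>\<kappa>\<^sub>i = min v\<^sub>i z\<^sub>i\<close> loses at most \<open>(v\<^sub>i - z\<^sub>i)\<^sup>+\<close>, whose expectation is exactly the cost \<open>c\<^sub>i\<close>.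
  Hence, by induction on the number of remaining openings, the expected continuation value
  never exceeds the expectation of the potential
  \<open>max (best prize seen so far) (max of \<kappa>\<^sub>j over the unopened boxes)\<close>;
  initially this potential is \<open>K\<close>.
  Lower bound: for \<open>T = K/2\<close>, the threshold policy with target \<open>(T, \<infinity>)\<close> earns at least
  \<open>min T (\<Sum>\<^sub>i E[(\<kappa>\<^sub>i - T)\<^sup>+])\<close>: by induction over the boxes, a box with \<open>z\<^sub>i > T\<close> pays for
  its opening cost out of its excess over \<open>z\<^sub>i\<close>, and claiming a prize gives more than \<open>T\<close>.
  Finally \<open>\<Sum>\<^sub>i E[(\<kappa>\<^sub>i - T)\<^sup>+] \<ge> K - T = T\<close>.\<close>

lemma
  fixes f :: "('i \<Rightarrow> 'a) \<Rightarrow> real"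
  assumes prob: "\<forall>j\<in>insert i I. prob_space (M j)"
    and f: "integrable (PiM (insert i I) M) f"
  shows AE_integrable_PiM_update: "AE a in M i. integrable (PiM I M) (\<lambda>y. f (y(i:=a)))"
    and integrable_integral_PiM_update: "integrable (M i) (\<lambda>a. \<integral>y. f (y(i:=a)) \<partial>PiM I M)"
    and integral_PiM_insert_update:
      "integral\<^sup>L (PiM (insert i I) M) f = (\<integral>a. (\<integral>y. f (y(i:=a)) \<partial>PiM I M) \<partial>M i)"
proof -
  interpret A: prob_space "M i" using prob by simp
  interpret B: prob_space "PiM I M" by (rule prob_space_PiM) (use prob in auto)
  interpret P: pair_sigma_finite "M i" "PiM I M"
    by (intro pair_sigma_finite.intro A.sigma_finite_measure_axioms B.sigma_finite_measure_axioms)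
  have upd: "(\<lambda>(a, y). y(i:=a)) \<in> measurable (M i \<Otimes>\<^sub>M PiM I M) (PiM (insert i I) M)"
    by measurable
  have distr: "distr (M i \<Otimes>\<^sub>M PiM I M) (PiM (insert i I) M) (\<lambda>(a, y). y(i:=a)) = PiM (insert i I) M"
    by (rule distr_pair_PiM_eq_PiM) (use prob in auto)
  have int: "integrable (M i \<Otimes>\<^sub>M PiM I M) (\<lambda>(a, y). f (y(i:=a)))"
    using integrable_distr[OF upd, of f] f distr by (simp add: case_prod_beta')
  show "AE a in M i. integrable (PiM I M) (\<lambda>y. f (y(i:=a)))"
    using P.AE_integrable_fst[of "\<lambda>a y. f (y(i:=a))"] int by simp
  show "integrable (M i) (\<lambda>a. \<integral>y. f (y(i:=a)) \<partial>PiM I M)"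
    using P.integrable_fst[of "\<lambda>a y. f (y(i:=a))"] int by simp
  have "integral\<^sup>L (PiM (insert i I) M) f = (\<integral>p. f ((\<lambda>(a, y). y(i:=a)) p) \<partial>(M i \<Otimes>\<^sub>M PiM I M))"
    using f by (subst distr[symmetric], intro integral_distr[OF upd]) auto
  also have "\<dots> = (\<integral>a. (\<integral>y. f (y(i:=a)) \<partial>PiM I M) \<partial>M i)"
    using P.integral_fst[of "\<lambda>a y. f (y(i:=a))"] int by (simp add: case_prod_beta')
  finally show "integral\<^sup>L (PiM (insert i I) M) f = (\<integral>a. (\<integral>y. f (y(i:=a)) \<partial>PiM I M) \<partial>M i)" .
qed

lemma integral_PiM_insert_le:
  fixes F G :: "('i \<Rightarrow> 'a) \<Rightarrow> real"
  assumes prob: "\<forall>j\<in>insert i I. prob_space (M j)"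
    and F: "integrable (PiM (insert i I) M) F" and G: "integrable (PiM (insert i I) M) G"
    and g: "integrable (M i) g"
    and le: "AE a in M i. (\<integral>y. F (y(i:=a)) \<partial>PiM I M) \<le> (\<integral>y. G (y(i:=a)) \<partial>PiM I M) + g a"
  shows "integral\<^sup>L (PiM (insert i I) M) F \<le> integral\<^sup>L (PiM (insert i I) M) G + integral\<^sup>L (M i) g"
proof -
  note G_inner = integrable_integral_PiM_update[OF prob G]
  have "integral\<^sup>L (PiM (insert i I) M) F = (\<integral>a. (\<integral>y. F (y(i:=a)) \<partial>PiM I M) \<partial>M i)"
    by (rule integral_PiM_insert_update[OF prob F])
  also have "\<dots> \<le> (\<integral>a. (\<integral>y. G (y(i:=a)) \<partial>PiM I M) + g a \<partial>M i)"
    by (intro integral_mono_AE integrable_integral_PiM_update[OF prob F]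
        Bochner_Integration.integrable_add G_inner g le)
  also have "\<dots> = integral\<^sup>L (PiM (insert i I) M) G + integral\<^sup>L (M i) g"
    using G_inner g integral_PiM_insert_update[OF prob G] by simp
  finally show ?thesis .
qed

lemma
  fixes g :: "'a \<Rightarrow> real"
  assumes prob: "\<forall>i\<in>I. prob_space (M i)" and j: "j \<in> I" and g: "integrable (M j) g"
  shows integrable_PiM_component: "integrable (PiM I M) (\<lambda>w. g (w j))"
    and integral_PiM_component: "(\<integral>w. g (w j) \<partial>PiM I M) = integral\<^sup>L (M j) g"
proof -
  have distr: "distr (PiM I M) (M j) (\<lambda>w. w j) = M j"
    by (rule distr_PiM_component) (use prob j in auto)
  have comp: "(\<lambda>w. w j) \<in> measurable (PiM I M) (M j)"
    using j by (rule measurable_component_singleton)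
  show "integrable (PiM I M) (\<lambda>w. g (w j))"
    using integrable_distr[OF comp, of g] distr g by simp
  show "(\<integral>w. g (w j) \<partial>PiM I M) = integral\<^sup>L (M j) g"
    using integral_distr[OF comp, of g] distr g by auto
qed

lemma borel_measurable_Max_insert:
  fixes g :: "'i \<Rightarrow> 'a \<Rightarrow> real"
  assumes "finite S" "\<And>j. j \<in> S \<Longrightarrow> g j \<in> borel_measurable N"
  shows "(\<lambda>w. Max (insert b ((\<lambda>j. g j w) ` S))) \<in> borel_measurable N"
proof -
  have "insert b ((\<lambda>j. g j w) ` S) = (\<lambda>x. case x of None \<Rightarrow> b | Some j \<Rightarrow> g j w) ` insert None (Some ` S)"
    for w by (auto simp: image_image)
  then show ?thesis
    using assms by (simp only:) (rule borel_measurable_Max; auto split: option.splits)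
qed

text \<open>The search procedure reads the prizes of opened boxes from the outcome, and the history
  records them. Overriding the outcome by the history makes the run independent of the prizes
  of opened boxes, so that only the unopened boxes remain to be integrated over.\<close>
definition merge_history :: "(nat \<times> real) list \<Rightarrow> (nat \<Rightarrow> real) \<Rightarrow> nat \<Rightarrow> real" where
  "merge_history h w j = (case map_of h j of Some v \<Rightarrow> v | None \<Rightarrow> w j)"

definition best_prize :: "(nat \<times> real) list \<Rightarrow> real" where
  "best_prize h = Max (insert 0 (snd ` set h))"

text \<open>The potential of the upper bound; \<open>min (w j) (z j)\<close> is the covered call value \<open>\<kappa>\<^sub>j\<close>.\<close>
definition covered_max :: "(nat \<Rightarrow> real) \<Rightarrow> (nat \<times> real) list \<Rightarrow> nat set \<Rightarrow> (nat \<Rightarrow> real) \<Rightarrow> real" where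
  "covered_max z h U w = Max (insert (best_prize h) ((\<lambda>j. min (w j) (z j)) ` U))"

lemma merge_history_Nil [simp]: "merge_history [] w = w"
  by (simp add: merge_history_def fun_eq_iff)

lemma merge_history_update:
  assumes "i \<notin> fst ` set h"
  shows "merge_history h (y(i:=a)) = merge_history (h @ [(i, a)]) y"
    and "merge_history (h @ [(i, a)]) y i = a"
proof -
  have "map_of h i = None" using assms by (simp add: map_of_eq_None_iff)
  then show "merge_history h (y(i:=a)) = merge_history (h @ [(i, a)]) y"
    and "merge_history (h @ [(i, a)]) y i = a"
    by (auto simp: fun_eq_iff merge_history_def map_of_append map_add_def split: option.splits)
qed

lemma best_prize_nonneg: "0 \<le> best_prize h"
  unfolding best_prize_def by (rule Max_ge) auto

lemma best_prize_Nil [simp]: "best_prize [] = 0"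
  by (simp add: best_prize_def)

lemma best_prize_snoc: "best_prize (h @ [(i, v)]) = max v (best_prize h)"
proof -
  have "best_prize (h @ [(i, v)]) = Max (insert v (insert 0 (snd ` set h)))"
    unfolding best_prize_def by (simp add: insert_commute)
  also have "\<dots> = max v (best_prize h)"
    unfolding best_prize_def by (subst Max_insert) auto
  finally show ?thesis .
qed

lemma claim_value_le_best_prize: "claim_value h (merge_history h w) a \<le> best_prize h"
proof (cases "\<exists>j. a = Some j \<and> j \<in> fst ` set h")
  case True
  then obtain j v where a: "a = Some j" and v: "map_of h j = Some v"
    by (metis map_of_eq_None_iff not_None_eq)
  then have "v \<le> best_prize h"
    unfolding best_prize_def by (intro Max_ge) (force dest: map_of_SomeD)+
  then show ?thesis using True a v by (simp add: claim_value_def merge_history_def)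
next
  case False
  then show ?thesis by (auto simp: claim_value_def best_prize_nonneg split: option.split)
qed

lemma covered_max_ge_best_prize: "finite U \<Longrightarrow> best_prize h \<le> covered_max z h U w"
  unfolding covered_max_def by (rule Max_ge) auto

lemma search_run_stop_le_covered_max:
  assumes "finite U" "\<forall>i. s h = Open i \<longrightarrow> k = 0 \<or> m \<le> i \<or> i \<in> fst ` set h"
  shows "search_run m c s (merge_history h w) k h \<le> covered_max z h U w"
proof -
  have "search_run m c s (merge_history h w) k h \<le> best_prize h"
    using assms(2) claim_value_le_best_prize[of h w] best_prize_nonneg[of h]
    by (cases k) (auto split: action.split)
  then show ?thesis using covered_max_ge_best_prize[OF assms(1)] by (rule order_trans)
qed

lemma search_run_Open:
  assumes "s h = Open i" "i < m" "i \<notin> fst ` set h"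
  shows "search_run m c s (merge_history h (y(i:=a))) (Suc k) h
    = search_run m c s (merge_history (h @ [(i, a)]) y) k (h @ [(i, a)]) - c i"
  using assms merge_history_update[OF assms(3)] by simp

lemma covered_max_le:
  assumes "finite U"
  shows "covered_max z h U w \<le> best_prize h + (\<Sum>j\<in>U. \<bar>z j\<bar>)"
proof -
  have "min (w j) (z j) \<le> (\<Sum>j\<in>U. \<bar>z j\<bar>)" if "j \<in> U" for j
  proof -
    have "\<bar>z j\<bar> \<le> (\<Sum>j\<in>U. \<bar>z j\<bar>)" by (rule member_le_sum) (use that assms in auto)
    then show ?thesis by linarith
  qed
  then show ?thesis
    unfolding covered_max_def using assms best_prize_nonneg[of h]
    by (auto simp: sum_nonneg add_increasing)
qed

lemma covered_max_snoc:
  "finite U \<Longrightarrow> covered_max z (h @ [(i, v)]) U w = max v (covered_max z h U w)"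
  unfolding covered_max_def best_prize_snoc
  by (cases "U = {}") (simp_all add: max.assoc)

lemma covered_max_snoc_le:
  "finite U \<Longrightarrow>
    covered_max z (h @ [(i, a)]) U w \<le> covered_max z (h @ [(i, min a (z i))]) U w + max (a - z i) 0"
  by (auto simp: covered_max_snoc max_def min_def)

lemma covered_max_reveal:
  assumes "finite I" "i \<notin> I"
  shows "covered_max z h (insert i I) (y(i:=a)) = covered_max z (h @ [(i, min a (z i))]) I y"
proof -
  have "(\<lambda>j. min ((y(i:=a)) j) (z j)) ` insert i I = insert (min a (z i)) ((\<lambda>j. min (y j) (z j)) ` I)"
    using assms(2) by (auto intro!: image_cong)
  then have "covered_max z h (insert i I) (y(i:=a))
      = Max (insert (min a (z i)) (insert (best_prize h) ((\<lambda>j. min (y j) (z j)) ` I)))"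
    unfolding covered_max_def by (simp add: insert_commute)
  also have "\<dots> = max (min a (z i)) (covered_max z h I y)"
    unfolding covered_max_def using assms(1) by (subst Max_insert) auto
  finally show ?thesis by (simp add: covered_max_snoc[OF assms(1)])
qed

lemma covered_max_excess_le:
  assumes "finite U" "0 \<le> T"
  shows "covered_max z [] U w - T \<le> (\<Sum>j\<in>U. max (min (w j) (z j) - T) 0)"
proof -
  have "covered_max z [] U w \<in> insert 0 ((\<lambda>j. min (w j) (z j)) ` U)"
    unfolding covered_max_def best_prize_Nil using assms(1) by (intro Max_in) auto
  then show ?thesis
  proof
    assume "covered_max z [] U w = 0"
    moreover have "0 \<le> (\<Sum>j\<in>U. max (min (w j) (z j) - T) 0)" by (intro sum_nonneg) auto
    ultimately show ?thesis using assms(2) by simp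
  next
    assume "covered_max z [] U w \<in> (\<lambda>j. min (w j) (z j)) ` U"
    then obtain j where "j \<in> U" "covered_max z [] U w = min (w j) (z j)" by blast
    then show ?thesis using member_le_sum[of j U "\<lambda>j. max (min (w j) (z j) - T) 0"] assms(1) by simp
  qed
qed

lemma threshold_run_update:
  "i \<notin> set is \<Longrightarrow> threshold_run c z X is (w(i:=a)) = threshold_run c z X is w"
  by (induction "is") auto

lemma threshold_run_abs_le:
  "distinct is \<Longrightarrow> \<bar>threshold_run c z X is w\<bar> \<le> (\<Sum>j\<in>set is. \<bar>c j\<bar> + \<bar>w j\<bar>)"
proof (induction "is")
  case (Cons i "is")
  then have IH: "\<bar>threshold_run c z X is w\<bar> \<le> (\<Sum>j\<in>set is. \<bar>c j\<bar> + \<bar>w j\<bar>)" by simp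
  have "0 \<le> (\<Sum>j\<in>set is. \<bar>c j\<bar> + \<bar>w j\<bar>)" by (intro sum_nonneg) auto
  with IH Cons.prems show ?case by (auto simp: abs_if split: if_splits)
qed simp

text \<open>One box of the threshold policy with prize \<open>a\<close>, when the remaining boxes are worth
  \<open>V \<ge> min T S\<close>. The left side is chosen so that its expectation is \<open>min T S + E[(\<kappa> - T)\<^sup>+]\<close>,
  because \<open>E[(v - z)\<^sup>+] = c\<close>.\<close>
lemma threshold_step_le:
  fixes T S V a z c :: real
  assumes "min T S \<le> V"
  shows "min T S + max (min a z - T) 0 + (if T < z then max (a - z) 0 - c else 0)
           \<le> (if T < z then (if T < a then a else V) - c else V)"
  using assms by (auto simp: max_def min_def)

locale box_problem =
  fixes m :: nat and M :: "nat \<Rightarrow> real measure" and c z :: "nat \<Rightarrow> real"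
  assumes prob: "\<And>i. i < m \<Longrightarrow> prob_space (M i)"
    and borel: "\<And>i. i < m \<Longrightarrow> sets (M i) = sets borel"
    and nonneg: "\<And>i. i < m \<Longrightarrow> AE x in M i. 0 \<le> x"
    and prio_int: "\<And>i. i < m \<Longrightarrow> integrable (M i) (\<lambda>x. max (x - z i) 0)"
    and prio: "\<And>i. i < m \<Longrightarrow> (\<integral>x. max (x - z i) 0 \<partial>M i) = c i"
begin

abbreviation unopened :: "(nat \<times> real) list \<Rightarrow> nat set" where
  "unopened h \<equiv> {..<m} - fst ` set h"

lemma prob_space_PiM_boxes: "I \<subseteq> {..<m} \<Longrightarrow> prob_space (PiM I M)"
  by (rule prob_space_PiM) (use prob in auto)

lemma measurable_prize:
  assumes "I \<subseteq> {..<m}" "j \<in> I"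
  shows "(\<lambda>w. w j) \<in> borel_measurable (PiM I M)"
  using measurable_component_singleton[OF assms(2), of M] borel[of j] assms
  by (subst measurable_cong_sets[OF refl borel[symmetric]]) auto

lemma integrable_prize:
  assumes i: "i < m"
  shows "integrable (M i) (\<lambda>x. x)"
proof -
  interpret prob_space "M i" using prob i .
  have "AE x in M i. norm x \<le> norm (max (x - z i) 0 + \<bar>z i\<bar>)"
    using nonneg[OF i] by eventually_elim auto
  moreover have "(\<lambda>x. x) \<in> borel_measurable (M i)"
    by (subst measurable_cong_sets[OF borel[OF i] refl]) auto
  moreover have "integrable (M i) (\<lambda>x. max (x - z i) 0 + \<bar>z i\<bar>)"
    by (intro Bochner_Integration.integrable_add prio_int[OF i] integrable_const)
  ultimately show ?thesis by (blast intro: Bochner_Integration.integrable_bound)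
qed

lemma integrable_covered_max:
  assumes I: "I \<subseteq> {..<m}"
  shows "integrable (PiM I M) (covered_max z h I)"
proof -
  interpret prob_space "PiM I M" using prob_space_PiM_boxes[OF I] .
  have fin: "finite I" using I finite_subset by blast
  have "covered_max z h I \<in> borel_measurable (PiM I M)"
    unfolding covered_max_def using fin I
    by (intro borel_measurable_Max_insert borel_measurable_min measurable_prize) auto
  moreover have "norm (covered_max z h I w) \<le> best_prize h + (\<Sum>j\<in>I. \<bar>z j\<bar>)" for w
    using covered_max_le[OF fin, of z h w] covered_max_ge_best_prize[OF fin, of h z w]
      best_prize_nonneg[of h]
    by (simp add: abs_le_iff)
  ultimately show ?thesis by (intro integrable_const_bound) auto
qed

lemma integral_le_covered_max_after_open:
  assumes U: "insert i I \<subseteq> {..<m}" "i \<notin> I"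
    and F: "integrable (PiM (insert i I) M) F"
    and after_open: "AE a in M i. (\<integral>y. F (y(i:=a)) \<partial>PiM I M)
      \<le> (\<integral>y. covered_max z (h @ [(i, a)]) I y \<partial>PiM I M) - c i"
  shows "integral\<^sup>L (PiM (insert i I) M) F \<le> integral\<^sup>L (PiM (insert i I) M) (covered_max z h (insert i I))"
proof -
  have I: "I \<subseteq> {..<m}" "finite I" and i: "i < m" using U finite_subset by auto
  have prob_iI: "\<forall>j\<in>insert i I. prob_space (M j)" using U(1) prob by auto
  interpret A: prob_space "M i" using prob i by simp
  interpret B: prob_space "PiM I M" by (rule prob_space_PiM_boxes[OF I(1)])
  note covered = integrable_covered_max[OF I(1)]
  have "AE a in M i. (\<integral>y. F (y(i:=a)) \<partial>PiM I M)
      \<le> (\<integral>y. covered_max z h (insert i I) (y(i:=a)) \<partial>PiM I M) + (max (a - z i) 0 - c i)"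
    using after_open
  proof eventually_elim
    case (elim a)
    have "(\<integral>y. covered_max z (h @ [(i, a)]) I y \<partial>PiM I M)
        \<le> (\<integral>y. covered_max z (h @ [(i, min a (z i))]) I y + max (a - z i) 0 \<partial>PiM I M)"
      using covered_max_snoc_le[OF I(2)]
      by (intro integral_mono covered Bochner_Integration.integrable_add B.integrable_const) simp
    also have "\<dots> = (\<integral>y. covered_max z h (insert i I) (y(i:=a)) \<partial>PiM I M) + max (a - z i) 0"
      using covered by (simp add: covered_max_reveal[OF I(2) U(2)] B.prob_space)
    finally show ?case using elim by simp
  qed
  moreover have "integrable (M i) (\<lambda>a. max (a - z i) 0 - c i)"
    by (intro Bochner_Integration.integrable_diff prio_int[OF i] A.integrable_const)
  ultimately have "integral\<^sup>L (PiM (insert i I) M) F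
      \<le> integral\<^sup>L (PiM (insert i I) M) (covered_max z h (insert i I)) + (\<integral>a. max (a - z i) 0 - c i \<partial>M i)"
    using prob_iI F integrable_covered_max[OF U(1)] by (intro integral_PiM_insert_le)
  also have "(\<integral>a. max (a - z i) 0 - c i \<partial>M i) = 0"
    using prio_int[OF i] prio[OF i] by (simp add: A.prob_space)
  finally show ?thesis by simp
qed

lemma expected_search_run_le_covered_max:
  assumes "integrable (PiM (unopened h) M) (\<lambda>w. search_run m c s (merge_history h w) k h)"
  shows "(\<integral>w. search_run m c s (merge_history h w) k h \<partial>PiM (unopened h) M)
           \<le> (\<integral>w. covered_max z h (unopened h) w \<partial>PiM (unopened h) M)"
  using assms
proof (induction k arbitrary: h)
  case 0
  have "search_run m c s (merge_history h w) 0 h \<le> covered_max z h (unopened h) w" for w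
    by (rule search_run_stop_le_covered_max) auto
  with 0 show ?case by (intro integral_mono integrable_covered_max) auto
next
  case (Suc k)
  let ?F = "\<lambda>w. search_run m c s (merge_history h w) (Suc k) h"
  show ?case
  proof (cases "\<exists>i. s h = Open i \<and> i < m \<and> i \<notin> fst ` set h")
    case False
    then have "?F w \<le> covered_max z h (unopened h) w" for w
      by (intro search_run_stop_le_covered_max) auto
    with Suc.prems show ?thesis by (intro integral_mono integrable_covered_max) auto
  next
    case True
    then obtain i where open_i: "s h = Open i" and i: "i < m" "i \<notin> fst ` set h" by blast
    define I where "I = unopened h - {i}"
    have U: "unopened h = insert i I" and I: "I \<subseteq> {..<m}" "i \<notin> I"
      and U_snoc: "unopened (h @ [(i, a)]) = I" for a
      using i by (auto simp: I_def)
    have prob_iI: "\<forall>j\<in>insert i I. prob_space (M j)" using I(1) prob i by auto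
    interpret B: prob_space "PiM I M" by (rule prob_space_PiM_boxes[OF I(1)])
    note run_open = search_run_Open[where s = s and h = h, OF open_i i]
    have F: "integrable (PiM (insert i I) M) ?F" using Suc.prems U by simp
    show ?thesis
      unfolding U
    proof (rule integral_le_covered_max_after_open[OF _ I(2) F])
      show "insert i I \<subseteq> {..<m}" using I(1) i(1) by simp
      show "AE a in M i. (\<integral>y. ?F (y(i:=a)) \<partial>PiM I M)
          \<le> (\<integral>y. covered_max z (h @ [(i, a)]) I y \<partial>PiM I M) - c i"
        using AE_integrable_PiM_update[OF prob_iI F]
      proof eventually_elim
        case (elim a)
        let ?G = "\<lambda>y. search_run m c s (merge_history (h @ [(i, a)]) y) k (h @ [(i, a)])"
        have "integrable (PiM I M) (\<lambda>y. ?F (y(i:=a)) + c i)"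
          using elim by (rule Bochner_Integration.integrable_add[OF _ B.integrable_const])
        then have G: "integrable (PiM I M) ?G" by (simp only: run_open diff_add_cancel)
        have "(\<integral>y. ?F (y(i:=a)) \<partial>PiM I M) = (\<integral>y. ?G y \<partial>PiM I M) - c i"
          using G by (simp only: run_open) (simp add: B.prob_space)
        also have "\<dots> \<le> (\<integral>y. covered_max z (h @ [(i, a)]) I y \<partial>PiM I M) - c i"
          using Suc.IH[of "h @ [(i, a)]"] G unfolding U_snoc by simp
        finally show ?case .
      qed
    qed
  qed
qed

lemma opt_search_value_le_covered_max:
  "opt_search_value m M c \<le> (\<integral>w. covered_max z [] {..<m} w \<partial>PiM {..<m} M)"
  unfolding opt_search_value_def
proof (rule cSUP_least)
  have "search_value m c (\<lambda>_. Stop None) = (\<lambda>w. 0)"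
    by (cases m) (simp_all add: search_value_def claim_value_def fun_eq_iff)
  then have "(\<lambda>_. Stop None) \<in> {s. integrable (PiM {..<m} M) (search_value m c s)}" by simp
  then show "{s. integrable (PiM {..<m} M) (search_value m c s)} \<noteq> {}" by blast
next
  fix s assume "s \<in> {s. integrable (PiM {..<m} M) (search_value m c s)}"
  moreover have "search_value m c s = (\<lambda>w. search_run m c s (merge_history [] w) m [])"
    by (simp add: fun_eq_iff search_value_def)
  ultimately show "(\<integral>w. search_value m c s w \<partial>PiM {..<m} M) \<le> (\<integral>w. covered_max z [] {..<m} w \<partial>PiM {..<m} M)"
    using expected_search_run_le_covered_max[of "[]" s m] by simp
qed

lemma borel_measurable_threshold_run:
  assumes "set is \<subseteq> I" "I \<subseteq> {..<m}" and [measurable]: "X \<in> sets borel"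
  shows "threshold_run c z X is \<in> borel_measurable (PiM I M)"
  using assms(1)
proof (induction "is")
  case (Cons i "is")
  have [measurable]: "(\<lambda>w. w i) \<in> borel_measurable (PiM I M)"
    using Cons.prems assms(2) by (intro measurable_prize) auto
  have [measurable]: "threshold_run c z X is \<in> borel_measurable (PiM I M)"
    using Cons by simp
  have "threshold_run c z X (i # is) = (\<lambda>w. if z i \<in> X
      then - c i + (if w i \<in> X then w i else threshold_run c z X is w) else threshold_run c z X is w)"
    by (simp add: fun_eq_iff)
  then show ?case by simp
next
  case Nil
  have "threshold_run c z X [] = (\<lambda>_. 0)" by (simp add: fun_eq_iff)
  then show ?case by simp
qed

lemma integrable_threshold_run:
  assumes "distinct is" "set is \<subseteq> I" "I \<subseteq> {..<m}" "X \<in> sets borel"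
  shows "integrable (PiM I M) (threshold_run c z X is)"
proof -
  interpret prob_space "PiM I M" by (rule prob_space_PiM_boxes[OF assms(3)])
  have prize: "integrable (PiM I M) (\<lambda>w. \<bar>w j\<bar>)" if "j \<in> set is" for j
    using that assms(2,3) prob
    by (intro integrable_PiM_component[where g = abs] integrable_abs integrable_prize) auto
  have "integrable (PiM I M) (\<lambda>w. \<Sum>j\<in>set is. \<bar>c j\<bar> + \<bar>w j\<bar>)"
    by (intro Bochner_Integration.integrable_sum Bochner_Integration.integrable_add
        integrable_const prize)
  moreover have "norm (threshold_run c z X is w) \<le> norm (\<Sum>j\<in>set is. \<bar>c j\<bar> + \<bar>w j\<bar>)" for w
    using threshold_run_abs_le[OF assms(1), of c z X w] by (simp add: sum_nonneg)
  ultimately show ?thesis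
    using borel_measurable_threshold_run[OF assms(2-4)] by (blast intro: Bochner_Integration.integrable_bound)
qed

lemma integrable_kappa_excess:
  assumes "j < m"
  shows "integrable (M j) (\<lambda>x. max (min x (z j) - T) 0)"
proof -
  interpret prob_space "M j" using prob assms .
  show ?thesis
    by (intro integrable_max integrable_min Bochner_Integration.integrable_diff
        integrable_prize[OF assms] integrable_const)
qed

lemma expected_threshold_run_ge:
  assumes "distinct is" "set is \<subseteq> {..<m}"
  shows "min T (\<Sum>j\<in>set is. \<integral>x. max (min x (z j) - T) 0 \<partial>M j)
           \<le> (\<integral>w. threshold_run c z {T<..} is w \<partial>PiM (set is) M)"
  using assms
proof (induction "is")
  case Nil
  then show ?case by simp
next
  case (Cons i "is")
  define S where "S = (\<Sum>j\<in>set is. \<integral>x. max (min x (z j) - T) 0 \<partial>M j)"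
  define e where "e = (\<integral>x. max (min x (z i) - T) 0 \<partial>M i)"
  define V where "V = (\<integral>y. threshold_run c z {T<..} is y \<partial>PiM (set is) M)"
  have i: "i < m" "i \<notin> set is" and "is": "set is \<subseteq> {..<m}" "distinct is"
    using Cons.prems by auto
  have IH: "min T S \<le> V" using Cons by (simp add: S_def V_def)
  have prob_iI: "\<forall>j\<in>insert i (set is). prob_space (M j)" using "is"(1) prob i by auto
  interpret A: prob_space "M i" using prob i by simp
  interpret B: prob_space "PiM (set is) M" by (rule prob_space_PiM_boxes[OF "is"(1)])
  let ?f = "threshold_run c z {T<..} (i # is)"
  have f: "integrable (PiM (insert i (set is)) M) ?f"
    using Cons.prems by (intro integrable_threshold_run) auto
  have "integrable (PiM (set is) M) (threshold_run c z {T<..} is)"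
    using "is" by (intro integrable_threshold_run) auto
  then have inner: "(\<integral>y. ?f (y(i:=a)) \<partial>PiM (set is) M) = (if T < z i then (if T < a then a else V) - c i else V)"
    for a using threshold_run_update[OF i(2)]
    by (cases "T < z i"; cases "T < a") (simp_all add: V_def B.prob_space)
  let ?lb = "\<lambda>a. min T S + max (min a (z i) - T) 0 + (if T < z i then max (a - z i) 0 - c i else 0)"
  have lb: "integrable (M i) ?lb \<and> integral\<^sup>L (M i) ?lb = min T S + e"
    using integrable_kappa_excess[OF i(1), of T] prio_int[OF i(1)] prio[OF i(1)]
    by (cases "T < z i") (simp_all add: e_def A.prob_space)
  have "(\<Sum>j\<in>set (i # is). \<integral>x. max (min x (z j) - T) 0 \<partial>M j) = e + S"
    using i(2) by (simp add: S_def e_def)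
  moreover have "0 \<le> e" unfolding e_def by (rule Bochner_Integration.integral_nonneg) auto
  ultimately have "min T (\<Sum>j\<in>set (i # is). \<integral>x. max (min x (z j) - T) 0 \<partial>M j) \<le> min T S + e"
    by (simp add: min_def)
  also have "\<dots> = integral\<^sup>L (M i) ?lb" using lb by simp
  also have "\<dots> \<le> (\<integral>a. (if T < z i then (if T < a then a else V) - c i else V) \<partial>M i)"
    using lb integrable_integral_PiM_update[OF prob_iI f] threshold_step_le[OF IH]
    by (intro integral_mono) (simp_all only: inner)
  also have "\<dots> = (\<integral>a. (\<integral>y. ?f (y(i:=a)) \<partial>PiM (set is) M) \<partial>M i)"
    by (simp only: inner)
  also have "\<dots> = (\<integral>w. ?f w \<partial>PiM (set (i # is)) M)"
    using integral_PiM_insert_update[OF prob_iI f] by (simp only: list.set(2))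
  finally show ?case .
qed

lemma threshold_value_ge:
  assumes "0 \<le> T"
  shows "min T ((\<integral>w. covered_max z [] {..<m} w \<partial>PiM {..<m} M) - T) \<le> threshold_value m M c z {T<..}"
proof -
  interpret prob_space "PiM {..<m} M" by (rule prob_space_PiM_boxes) simp
  have excess: "integrable (PiM {..<m} M) (\<lambda>w. max (min (w j) (z j) - T) 0)" if "j < m" for j
    using that prob by (intro integrable_PiM_component integrable_kappa_excess) auto
  have "(\<integral>w. covered_max z [] {..<m} w \<partial>PiM {..<m} M) - T
      = (\<integral>w. covered_max z [] {..<m} w - T \<partial>PiM {..<m} M)"
    using integrable_covered_max[of "{..<m}" "[]"] by (simp add: prob_space)
  also have "\<dots> \<le> (\<integral>w. (\<Sum>j<m. max (min (w j) (z j) - T) 0) \<partial>PiM {..<m} M)"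
    using integrable_covered_max[of "{..<m}" "[]"] covered_max_excess_le[OF _ assms] excess
    by (intro integral_mono) auto
  also have "\<dots> = (\<Sum>j<m. \<integral>w. max (min (w j) (z j) - T) 0 \<partial>PiM {..<m} M)"
    using excess by (intro Bochner_Integration.integral_sum) auto
  also have "\<dots> = (\<Sum>j<m. \<integral>x. max (min x (z j) - T) 0 \<partial>M j)"
    using prob by (intro sum.cong refl integral_PiM_component integrable_kappa_excess) auto
  finally have "min T ((\<integral>w. covered_max z [] {..<m} w \<partial>PiM {..<m} M) - T)
      \<le> min T (\<Sum>j\<in>set [0..<m]. \<integral>x. max (min x (z j) - T) 0 \<partial>M j)"
    by (simp add: atLeast0LessThan)
  also have "\<dots> \<le> threshold_value m M c z {T<..}"
    using expected_threshold_run_ge[of "[0..<m]"] by (simp add: threshold_value_def atLeast0LessThan)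
  finally show ?thesis .
qed

end

theorem mainTheorem3:
  fixes m :: nat and M :: "nat \<Rightarrow> real measure" and c z :: "nat \<Rightarrow> real"
  assumes prob: "\<And>i. i < m \<Longrightarrow> prob_space (M i)"
    and borel: "\<And>i. i < m \<Longrightarrow> sets (M i) = sets borel"
    and nonneg: "\<And>i. i < m \<Longrightarrow> AE x in M i. 0 \<le> x"
    and cost: "\<And>i. i < m \<Longrightarrow> 0 \<le> c i"
    and prio_int: "\<And>i. i < m \<Longrightarrow> integrable (M i) (\<lambda>x. max (x - z i) 0)"
    and prio: "\<And>i. i < m \<Longrightarrow> (\<integral>x. max (x - z i) 0 \<partial>M i) = c i"
  shows "\<exists>X. target_interval X \<and> threshold_value m M c z X \<ge> opt_search_value m M c / 2"
proof -
  interpret box_problem m M c z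
    by (rule box_problem.intro[OF prob borel nonneg prio_int prio])
  define K where "K = (\<integral>w. covered_max z [] {..<m} w \<partial>PiM {..<m} M)"
  have "0 \<le> K"
    unfolding K_def using covered_max_ge_best_prize[of "{..<m}" "[]"]
    by (intro Bochner_Integration.integral_nonneg) auto
  then have "K / 2 \<le> threshold_value m M c z {K / 2<..}"
    using threshold_value_ge[of "K / 2"] by (simp add: K_def)
  moreover have "opt_search_value m M c \<le> K"
    unfolding K_def by (rule opt_search_value_le_covered_max)
  moreover have "target_interval {K / 2<..}"
    unfolding target_interval_def by blast
  ultimately show ?thesis by (intro exI[of _ "{K / 2<..}"]) auto
qed

end
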